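(* Assume $F=f+h$ is uniformly convex of degree $q\ge2$ with constant $\sigma_q>0$, that $p>q-1$, that $F$ attains its minimum $F^*$ at $x^*$, and consider the Regularized Composite Tensor Method $x_0\in\operatorname{dom}h$, $x_{k+1}=T_H(x_k)$, $k\ge0$, with $H=pL_p$. Assume $D=\sup_{x\in\operatorname{dom}h}\{\|x-x^*\|:F(x)\le F(x_0)\}<+\infty$ and set $$\omega_{p,q}=\frac{p+1}{p!}\Big(\frac{q-1}{q}\Big)^{q-1}\frac{L_pD^{p-q+1}}{\sigma_q}.$$ Let $$N=\Big\lceil 2p\Big(\frac{q^q}{(q-1)^{q-1}}\,\omega_{p,q}^{\frac{p+1}{p}}\Big)^{\frac1{p-q+1}}\Big\rceil+2.$$ Then after $N$ iterations the method is in the region $$\mathcal{Q}=\Big\{x\in\operatorname{dom}h:\ F(x)-F^*\le\frac1q\Big(\frac{\sigma_q^{p+1}}{(q-1)^{q-1}}\Big(\frac{p!}{(p+1)L_p}\Big)^q\Big)^{\frac1{p-q+1}}\Big\},$$ i.e. $x_N\in\mathcal{Q}$.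
   Context: $\mathbb{E}$ is a finite-dimensional real vector space with dual $\mathbb{E}^*$; $B:\mathbb{E}\to\mathbb{E}^*$ is a fixed self-adjoint positive-definite operator, $\|x\|=\langle Bx,x\rangle^{1/2}$, $\|g\|_*=\langle g,B^{-1}g\rangle^{1/2}$. Let $p\ge 2$ be an integer, $h:\mathbb{E}\to\mathbb{R}\cup\{+\infty\}$ proper closed convex, and $f$ convex and $p$ times differentiable on an open convex set containing $\operatorname{dom}h$, with $\|D^pf(x)-D^pf(y)\|\le L_p\|x-y\|$ for $x,y\in\operatorname{dom}h$, $0<L_p<\infty$, where for a symmetric $p$-linear form $\|A\|=\max_{\|u\|\le1}|A[u]^p|$. $F=f+h$. Taylor polynomial $\Omega_p(f,x;y)=f(x)+\sum_{k=1}^p\frac1{k!}D^kf(x)[y-x]^k$. For $x\in\operatorname{dom}h$, $T_H(x)=\arg\min_{y\in\mathbb{E}}\{\Omega_p(f,x;y)+\frac{H}{(p+1)!}\|y-x\|^{p+1}+h(y)\}$. Uniform convexity of degree $q$ with constant $\sigma_q$: $\langle G_x-G_y,x-y\rangle\ge\sigma_q\|x-y\|^q$ for all $x,y\in\operatorname{dom}h$, $G_x\in\partial F(x)$, $G_y\in\partial F(y)$. The region $\mathcal{Q}$ above is the paper's region of superlinear convergence with $L_p+H=(p+1)L_p$. *)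

theory Defs
  imports "HOL-Analysis.Analysis"
begin

text \<open>The space E is a euclidean_space type; the dual space is identified with E via the
standard inner product, and the operator B is a self-adjoint positive-definite linear map.\<close>

definition self_adj_pos_def :: "('a::euclidean_space \<Rightarrow> 'a) \<Rightarrow> bool" where
  "self_adj_pos_def B \<longleftrightarrow> linear B \<and> (\<forall>x y. inner (B x) y = inner x (B y))
     \<and> (\<forall>x. x \<noteq> 0 \<longrightarrow> inner (B x) x > 0)"

definition bnorm :: "('a::euclidean_space \<Rightarrow> 'a) \<Rightarrow> 'a \<Rightarrow> real" where
  "bnorm B x = sqrt (inner (B x) x)"

text \<open>Derivatives: Df k x is the k-th derivative of f at x, a k-linear form applied to a
list of k vectors. D^k f(x)[u]^k is Df k x (replicate k u).\<close>

definition p_times_diff_on ::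
  "nat \<Rightarrow> 'a::euclidean_space set \<Rightarrow> ('a \<Rightarrow> real) \<Rightarrow> (nat \<Rightarrow> 'a \<Rightarrow> 'a list \<Rightarrow> real) \<Rightarrow> bool" where
  "p_times_diff_on p U f Df \<longleftrightarrow>
     (\<forall>x\<in>U. Df 0 x [] = f x) \<and>
     (\<forall>k<p. \<forall>x\<in>U. \<forall>us. length us = k \<longrightarrow>
        ((\<lambda>z. Df k z us) has_derivative (\<lambda>v. Df (Suc k) x (us @ [v]))) (at x))"

definition form_norm :: "('a::euclidean_space \<Rightarrow> 'a) \<Rightarrow> nat \<Rightarrow> ('a list \<Rightarrow> real) \<Rightarrow> real" where
  "form_norm B p A = Sup {\<bar>A (replicate p u)\<bar> | u. bnorm B u \<le> 1}"

definition taylor ::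
  "('a::euclidean_space \<Rightarrow> real) \<Rightarrow> (nat \<Rightarrow> 'a \<Rightarrow> 'a list \<Rightarrow> real) \<Rightarrow> nat \<Rightarrow> 'a \<Rightarrow> 'a \<Rightarrow> real" where
  "taylor f Df p x y = f x + (\<Sum>k=1..p. Df k x (replicate k (y - x)) / fact k)"

text \<open>h proper closed convex with domain S: h is +infinity outside S.\<close>

definition proper_closed_convex :: "'a::euclidean_space set \<Rightarrow> ('a \<Rightarrow> real) \<Rightarrow> bool" where
  "proper_closed_convex S h \<longleftrightarrow> S \<noteq> {} \<and> convex S \<and> convex_on S h
     \<and> closed {(x, t). x \<in> S \<and> h x \<le> t}"

text \<open>Subdifferential of F (extended by +infinity outside S) at x in S.\<close>

definition subdiff :: "'a::euclidean_space set \<Rightarrow> ('a \<Rightarrow> real) \<Rightarrow> 'a \<Rightarrow> 'a set" where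
  "subdiff S F x = {G. \<forall>y\<in>S. F y \<ge> F x + inner G (y - x)}"

definition uniformly_convex ::
  "'a::euclidean_space set \<Rightarrow> ('a \<Rightarrow> 'a) \<Rightarrow> ('a \<Rightarrow> real) \<Rightarrow> real \<Rightarrow> real \<Rightarrow> bool" where
  "uniformly_convex S B F q \<sigma> \<longleftrightarrow>
     (\<forall>x\<in>S. \<forall>y\<in>S. \<forall>Gx\<in>subdiff S F x. \<forall>Gy\<in>subdiff S F y.
        inner (Gx - Gy) (x - y) \<ge> \<sigma> * bnorm B (x - y) powr q)"

definition tensor_step ::
  "'a::euclidean_space set \<Rightarrow> ('a \<Rightarrow> 'a) \<Rightarrow> ('a \<Rightarrow> real) \<Rightarrow> (nat \<Rightarrow> 'a \<Rightarrow> 'a list \<Rightarrow> real)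
    \<Rightarrow> ('a \<Rightarrow> real) \<Rightarrow> nat \<Rightarrow> real \<Rightarrow> 'a \<Rightarrow> 'a \<Rightarrow> bool" where
  "tensor_step S B f Df h p H x y \<longleftrightarrow> y \<in> S \<and>
     (\<forall>z\<in>S. taylor f Df p x y + H / fact (p+1) * bnorm B (y - x) ^ (p+1) + h y
           \<le> taylor f Df p x z + H / fact (p+1) * bnorm B (z - x) ^ (p+1) + h z)"

end

theory Submission
  imports Defs
begin

text \<open>Taylor's theorem along segments bounds the error of the p-th order model by
  L_p/(p+1)! ||y - x||^(p+1). As H \<ge> L_p, the new point T_H(x) therefore satisfies
  F(T_H(x)) \<le> F(z) + (L_p+H)/(p+1)! ||z - x||^(p+1) for every z. Taking z on the segment from
  x_k to x* and using convexity, \<delta>_k = F(x_k) - F* obeys \<delta>_(k+1) \<le> (1-t) \<delta>_k + c t^(p+1)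
  for all t \<in> [0,1], with c = (L_p+H) D^(p+1)/(p+1)!, and the choice t = (p+1)/(k+p+1) yields
  \<delta>_k \<le> (p+1)^(p+1) c / k^p. The number N of the statement is exactly large enough for this
  bound to fall below the level defining the region of superlinear convergence; uniform
  convexity enters only through the constants \<sigma>_q and \<omega>_(p,q).\<close>

section \<open>Taylor's theorem with a Lipschitz top derivative\<close>

lemma Taylor_upper_bound:
  fixes g :: "nat \<Rightarrow> real \<Rightarrow> real"
  assumes "p \<ge> 1"
    and der: "\<And>m t. m < p \<Longrightarrow> 0 \<le> t \<Longrightarrow> t \<le> 1 \<Longrightarrow> (g m has_real_derivative g (Suc m) t) (at t)"
    and top: "\<And>t. 0 \<le> t \<Longrightarrow> t \<le> 1 \<Longrightarrow> g p t - g p 0 \<le> C * t"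
  shows "g 0 1 \<le> (\<Sum>m\<le>p. g m 0 / fact m) + C / fact (p+1)"
proof -
  \<comment> \<open>Taylor's theorem for g minus C s^(p+1)/(p+1)!, whose p-th derivative is g_p(s) - C s.\<close>
  define e where "e m s = g m s - C * s^(p+1-m) / fact (p+1-m)" for m s
  have e_deriv: "\<forall>m t. m < p \<and> 0 \<le> t \<and> t \<le> 1 \<longrightarrow> DERIV (e m) t :> e (Suc m) t"
  proof (intro allI impI)
    fix m t assume mt: "m < p \<and> 0 \<le> t \<and> t \<le> (1::real)"
    have exps: "p + 1 - m = Suc (p - m)" "p + 1 - Suc m = p - m" using mt by auto
    have "DERIV (\<lambda>s. C * s^(Suc (p-m)) / fact (Suc (p-m))) t
            :> C * (real (Suc (p-m)) * t^(p-m)) / fact (Suc (p-m))"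
      using DERIV_cdivide[OF DERIV_cmult[OF DERIV_pow[of "Suc (p-m)" t], of C], of "fact (Suc (p-m))"]
      by simp
    moreover have "fact (Suc (p-m)) = real (Suc (p-m)) * (fact (p-m)::real)" by (simp add: fact_Suc)
    ultimately have "DERIV (\<lambda>s. C * s^(Suc (p-m)) / fact (Suc (p-m))) t :> C * t^(p-m) / fact (p-m)"
      by (simp del: of_nat_Suc)
    then show "DERIV (e m) t :> e (Suc m) t"
      unfolding e_def exps using DERIV_diff[OF der[of m t]] mt by auto
  qed
  obtain t where t: "0 < t" "t < 1"
    and taylor: "e 0 1 = (\<Sum>m<p. (e m 0 / fact m) * (1 - 0)^m) + (e p t / fact p) * (1 - 0)^p"
    using Taylor[of p e "e 0" 0 1 0 1, OF _ refl e_deriv] \<open>p \<ge> 1\<close> by auto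
  have "(\<Sum>m<p. (e m 0 / fact m) * (1 - 0)^m) = (\<Sum>m<p. g m 0 / fact m)"
    by (rule sum.cong) (auto simp: e_def)
  moreover have "(\<Sum>m\<le>p. g m 0 / fact m) = (\<Sum>m<p. g m 0 / fact m) + g p 0 / fact p"
    by (simp add: lessThan_Suc_atMost[symmetric])
  moreover have "(g p t - C * t) / fact p \<le> g p 0 / fact p"
    using top[of t] t by (simp add: divide_right_mono)
  ultimately show ?thesis using taylor by (simp add: e_def)
qed

lemma Taylor_remainder_bound:
  fixes g :: "nat \<Rightarrow> real \<Rightarrow> real"
  assumes "p \<ge> 1"
    and der: "\<And>m t. m < p \<Longrightarrow> 0 \<le> t \<Longrightarrow> t \<le> 1 \<Longrightarrow> (g m has_real_derivative g (Suc m) t) (at t)"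
    and top: "\<And>t. 0 \<le> t \<Longrightarrow> t \<le> 1 \<Longrightarrow> \<bar>g p t - g p 0\<bar> \<le> C * t"
  shows "\<bar>g 0 1 - (\<Sum>m\<le>p. g m 0 / fact m)\<bar> \<le> C / fact (p+1)"
proof -
  have "g 0 1 \<le> (\<Sum>m\<le>p. g m 0 / fact m) + C / fact (p+1)"
    using Taylor_upper_bound[of p g C] assms by (auto simp: abs_le_iff)
  moreover have "- g 0 1 \<le> (\<Sum>m\<le>p. - g m 0 / fact m) + C / fact (p+1)"
  proof -
    have "(\<lambda>t. - g 0 t) 1 \<le> (\<Sum>m\<le>p. (\<lambda>t. - g m t) 0 / fact m) + C / fact (p+1)"
      by (rule Taylor_upper_bound[OF \<open>p \<ge> 1\<close>]) (use DERIV_minus[OF der] top in \<open>auto simp: abs_le_iff\<close>)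
    then show ?thesis by simp
  qed
  ultimately show ?thesis by (simp add: sum_negf abs_le_iff)
qed

section \<open>Multilinear forms\<close>

definition multilinear :: "nat \<Rightarrow> ('a::real_vector list \<Rightarrow> real) \<Rightarrow> bool" where
  "multilinear n A \<longleftrightarrow> (\<forall>i<n. \<forall>us. length us = n \<longrightarrow> linear (\<lambda>v. A (us[i:=v])))"

lemma multilinear_linear_Cons:
  assumes "multilinear (Suc n) A" "length us = n"
  shows "linear (\<lambda>v. A (v # us))"
proof -
  have "linear (\<lambda>v. A ((u # us)[0 := v]))" for u
    using assms unfolding multilinear_def by (metis length_Cons zero_less_Suc)
  then show ?thesis by simp
qed

lemma multilinear_Cons:
  fixes A :: "'a::real_vector list \<Rightarrow> real"
  shows "multilinear (Suc n) A \<Longrightarrow> multilinear n (\<lambda>us. A (v # us))"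
  unfolding multilinear_def
proof (intro allI impI)
  fix i and us :: "'a list"
  assume "\<forall>i<Suc n. \<forall>us. length us = Suc n \<longrightarrow> linear (\<lambda>v. A (us[i := v]))"
    and "i < n" "length us = n"
  then have "linear (\<lambda>w. A ((v # us)[Suc i := w]))"
    by (metis Suc_mono length_Cons)
  then show "linear (\<lambda>w. A (v # us[i := w]))" by simp
qed

lemma multilinear_diff:
  "multilinear n A \<Longrightarrow> multilinear n A' \<Longrightarrow> multilinear n (\<lambda>us. A us - A' us)"
  unfolding multilinear_def using linear_compose_sub by blast

lemma multilinear_map_scaleR:
  "multilinear n A \<Longrightarrow> length us = n \<Longrightarrow> A (map (scaleR c) us) = c ^ n * A us"
proof (induction n arbitrary: A us)
  case 0
  then show ?case by simp
next
  case (Suc n)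
  then obtain u vs where us: "us = u # vs" "length vs = n" by (cases us) auto
  have "A (map (scaleR c) us) = c * A (u # map (scaleR c) vs)"
    using linear_scale[OF multilinear_linear_Cons[OF Suc.prems(1)]] us by simp
  also have "A (u # map (scaleR c) vs) = c ^ n * A (u # vs)"
    using Suc.IH[OF multilinear_Cons[OF Suc.prems(1)] us(2)] .
  finally show ?case using us by simp
qed

lemma multilinear_bounded:
  fixes A :: "'a::euclidean_space list \<Rightarrow> real"
  assumes "multilinear n A"
  shows "\<exists>M. \<forall>us. length us = n \<longrightarrow> \<bar>A us\<bar> \<le> M * prod_list (map norm us)"
  using assms
proof (induction n arbitrary: A)
  case 0
  show ?case by (rule exI[of _ "\<bar>A []\<bar>"]) simp
next
  case (Suc n)
  have "\<forall>b. \<exists>M. \<forall>us. length us = n \<longrightarrow> \<bar>A (b # us)\<bar> \<le> M * prod_list (map norm us)"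
    using Suc.IH[OF multilinear_Cons[OF Suc.prems]] by blast
  then obtain M where M: "\<And>b us. length us = n \<Longrightarrow> \<bar>A (b # us)\<bar> \<le> M b * prod_list (map norm us)"
    by metis
  show ?case
  proof (rule exI[of _ "\<Sum>b\<in>Basis. \<bar>M b\<bar>"], intro allI impI)
    fix us :: "'a list"
    assume "length us = Suc n"
    then obtain u vs where us: "us = u # vs" "length vs = n" by (cases us) auto
    have lin: "linear (\<lambda>v. A (v # vs))" using multilinear_linear_Cons[OF Suc.prems us(2)] .
    have "A (u # vs) = A ((\<Sum>b\<in>Basis. inner u b *\<^sub>R b) # vs)"
      by (simp add: euclidean_representation)
    also have "\<dots> = (\<Sum>b\<in>Basis. inner u b * A (b # vs))"
      using linear_sum[OF lin, of "\<lambda>b. inner u b *\<^sub>R b" Basis] linear_scale[OF lin]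
      by (simp add: o_def)
    finally have "\<bar>A (u # vs)\<bar> \<le> (\<Sum>b\<in>Basis. \<bar>inner u b * A (b # vs)\<bar>)"
      by (simp only: sum_abs)
    also have "\<dots> \<le> (\<Sum>b\<in>Basis. norm u * (\<bar>M b\<bar> * prod_list (map norm vs)))"
    proof (rule sum_mono)
      fix b :: 'a
      assume b: "b \<in> Basis"
      have "0 \<le> prod_list (map norm vs)" by (induction vs) auto
      then have "\<bar>A (b # vs)\<bar> \<le> \<bar>M b\<bar> * prod_list (map norm vs)"
        using M[OF us(2), of b] by (smt (verit) mult_right_mono abs_ge_self)
      then show "\<bar>inner u b * A (b # vs)\<bar> \<le> norm u * (\<bar>M b\<bar> * prod_list (map norm vs))"
        using Basis_le_norm[OF b, of u] by (simp add: abs_mult mult_mono)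
    qed
    also have "\<dots> = (\<Sum>b\<in>Basis. \<bar>M b\<bar>) * prod_list (map norm us)"
      using us by (simp add: sum_distrib_left sum_distrib_right algebra_simps)
    finally show "\<bar>A us\<bar> \<le> (\<Sum>b\<in>Basis. \<bar>M b\<bar>) * prod_list (map norm us)" using us by simp
  qed
qed

lemma has_derivative_linear_in_parameter:
  fixes \<phi> :: "'b::real_vector \<Rightarrow> 'a::real_normed_vector \<Rightarrow> real"
  assumes U: "open U" "x \<in> U"
    and lin: "\<And>z. z \<in> U \<Longrightarrow> linear (\<lambda>v. \<phi> v z)"
    and der: "\<And>v. (\<phi> v has_derivative \<Phi> v) (at x)"
  shows "linear (\<lambda>v. \<Phi> v y)"
proof -
  have unique: "\<Phi> v = \<Psi>" if "\<And>z. z \<in> U \<Longrightarrow> \<phi> v z = \<psi> z" "(\<psi> has_derivative \<Psi>) (at x)"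
    for v \<psi> \<Psi>
    using has_derivative_transform_within_open[OF der[of v] U] that has_derivative_unique
    by metis
  show ?thesis
  proof (rule linearI)
    fix a b
    have "\<Phi> (a + b) = (\<lambda>y. \<Phi> a y + \<Phi> b y)"
      by (rule unique[OF _ has_derivative_add[OF der der]]) (simp add: linear_add[OF lin])
    then show "\<Phi> (a + b) y = \<Phi> a y + \<Phi> b y" by metis
  next
    fix c a
    have "\<Phi> (c *\<^sub>R a) = (\<lambda>y. c * \<Phi> a y)"
      by (rule unique[OF _ has_derivative_mult_right[OF der]]) (simp add: linear_scale[OF lin])
    then show "\<Phi> (c *\<^sub>R a) y = c *\<^sub>R \<Phi> a y" by simp
  qed
qed

lemma p_times_diff_on_multilinear:
  fixes Df :: "nat \<Rightarrow> 'a::euclidean_space \<Rightarrow> 'a list \<Rightarrow> real"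
  assumes fdiff: "p_times_diff_on p U f Df" and U: "open U"
  shows "k \<le> p \<Longrightarrow> x \<in> U \<Longrightarrow> multilinear k (Df k x)"
proof (induction k arbitrary: x)
  case 0
  then show ?case by (simp add: multilinear_def)
next
  case (Suc k)
  have der: "((\<lambda>z. Df k z us) has_derivative (\<lambda>v. Df (Suc k) x (us @ [v]))) (at x)"
    if "length us = k" for us
    using fdiff Suc.prems that unfolding p_times_diff_on_def by simp
  show ?case unfolding multilinear_def
  proof (intro allI impI)
    fix i and ws :: "'a list"
    assume i: "i < Suc k" and ws: "length ws = Suc k"
    then obtain us w where uw: "ws = us @ [w]" "length us = k"
      by (metis length_Suc_conv_rev)
    show "linear (\<lambda>v. Df (Suc k) x (ws[i := v]))"
    proof (cases "i = k")
      case True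
      then show ?thesis
        using has_derivative_linear[OF der[OF uw(2)]] uw by (simp add: list_update_append)
    next
      case False
      then have "i < k" using i by simp
      have "linear (\<lambda>v. Df (Suc k) x (us[i := v] @ [w]))"
      proof (rule has_derivative_linear_in_parameter[OF U Suc.prems(2)])
        show "linear (\<lambda>v. Df k z (us[i := v]))" if "z \<in> U" for z
          using Suc.IH Suc.prems \<open>i < k\<close> uw(2) that unfolding multilinear_def by simp
        show "((\<lambda>z. Df k z (us[i := v])) has_derivative (\<lambda>y. Df (Suc k) x (us[i := v] @ [y]))) (at x)"
          for v using der uw(2) by simp
      qed
      then show ?thesis using uw \<open>i < k\<close> by (simp add: list_update_append)
    qed
  qed
qed

section \<open>The norm induced by B\<close>

lemma self_adj_pos_def_linear: "self_adj_pos_def B \<Longrightarrow> linear B"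
  unfolding self_adj_pos_def_def by simp

lemma bnorm_nonneg:
  assumes "self_adj_pos_def B"
  shows "0 \<le> bnorm B x"
proof (cases "x = 0")
  case True
  then show ?thesis using linear_0[OF self_adj_pos_def_linear[OF assms]] by (simp add: bnorm_def)
next
  case False
  then show ?thesis using assms unfolding self_adj_pos_def_def bnorm_def by force
qed

lemma bnorm_eq_0_iff:
  assumes "self_adj_pos_def B"
  shows "bnorm B x = 0 \<longleftrightarrow> x = 0"
  using assms linear_0[OF self_adj_pos_def_linear[OF assms]]
  unfolding self_adj_pos_def_def bnorm_def by force

lemma bnorm_scaleR:
  assumes "self_adj_pos_def B"
  shows "bnorm B (c *\<^sub>R x) = \<bar>c\<bar> * bnorm B x"
proof -
  have "inner (B (c *\<^sub>R x)) (c *\<^sub>R x) = c\<^sup>2 * inner (B x) x"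
    using linear_scale[OF self_adj_pos_def_linear[OF assms]] by (simp add: power2_eq_square)
  then show ?thesis unfolding bnorm_def by (simp add: real_sqrt_mult)
qed

lemma bnorm_minus_commute:
  assumes "self_adj_pos_def B"
  shows "bnorm B (x - y) = bnorm B (y - x)"
  using bnorm_scaleR[OF assms, of "-1" "x - y"] by simp

lemma norm_le_bnorm:
  fixes B :: "'a::euclidean_space \<Rightarrow> 'a"
  assumes B: "self_adj_pos_def B"
  shows "\<exists>K>0. \<forall>x. norm x \<le> K * bnorm B x"
proof -
  have "continuous_on (sphere 0 1) (\<lambda>x. inner (B x) x)"
    using self_adj_pos_def_linear[OF B]
    by (intro continuous_intros linear_continuous_on) (simp add: linear_conv_bounded_linear)
  moreover have "sphere (0::'a) 1 \<noteq> {}"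
    using nonempty_Basis by (metis all_not_in_conv mem_sphere_0 norm_Basis)
  ultimately obtain x0 where x0: "x0 \<in> sphere 0 1"
    and min: "\<And>y. y \<in> sphere 0 1 \<Longrightarrow> inner (B x0) x0 \<le> inner (B y) y"
    using continuous_attains_inf[OF compact_sphere] by blast
  define m where "m = inner (B x0) x0"
  have "x0 \<noteq> 0" using x0 by auto
  then have "m > 0" using B unfolding m_def self_adj_pos_def_def by blast
  have "norm x * sqrt m \<le> bnorm B x" for x
  proof (cases "x = 0")
    case True
    then show ?thesis using bnorm_nonneg[OF B] by simp
  next
    case False
    define u where "u = (1 / norm x) *\<^sub>R x"
    have "u \<in> sphere 0 1" using False unfolding u_def by simp
    then have "sqrt m \<le> bnorm B u" unfolding bnorm_def m_def using min by simp
    moreover have "bnorm B x = norm x * bnorm B u"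
      using bnorm_scaleR[OF B, of "norm x" u] False by (simp add: u_def)
    ultimately show ?thesis by (simp add: mult_left_mono)
  qed
  then show ?thesis using \<open>m > 0\<close> by (intro exI[of _ "1 / sqrt m"]) (simp add: field_simps)
qed

lemma bdd_above_form_norm:
  fixes B :: "'a::euclidean_space \<Rightarrow> 'a"
  assumes B: "self_adj_pos_def B" and A: "multilinear p A"
  shows "bdd_above {\<bar>A (replicate p u)\<bar> | u. bnorm B u \<le> 1}"
proof -
  obtain K where "K > 0" and K: "\<And>x. norm x \<le> K * bnorm B x" using norm_le_bnorm[OF B] by blast
  obtain M where M: "\<And>us. length us = p \<Longrightarrow> \<bar>A us\<bar> \<le> M * prod_list (map norm us)"
    using multilinear_bounded[OF A] by blast
  show ?thesis
  proof (rule bdd_aboveI, safe)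
    fix u :: 'a
    assume "bnorm B u \<le> 1"
    then have "K * bnorm B u \<le> K" using \<open>K > 0\<close> by (simp add: mult_left_le)
    then have "norm u \<le> K" using K[of u] by linarith
    then have "M * norm u ^ p \<le> \<bar>M\<bar> * K ^ p"
      by (intro mult_mono power_mono) auto
    then show "\<bar>A (replicate p u)\<bar> \<le> \<bar>M\<bar> * K ^ p"
      using M[of "replicate p u"] by simp
  qed
qed

lemma abs_le_form_norm:
  fixes B :: "'a::euclidean_space \<Rightarrow> 'a"
  assumes B: "self_adj_pos_def B" and A: "multilinear p A" and "p \<ge> 1"
  shows "\<bar>A (replicate p d)\<bar> \<le> form_norm B p A * bnorm B d ^ p"
proof (cases "d = 0")
  case True
  then have "A (replicate p d) = 0"
    using multilinear_map_scaleR[OF A, of "replicate p d" 0] \<open>p \<ge> 1\<close> by (simp add: power_0_left)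
  moreover have "bnorm B d = 0" using True bnorm_eq_0_iff[OF B] by blast
  ultimately show ?thesis using \<open>p \<ge> 1\<close> by (simp add: power_0_left)
next
  case False
  then have pos: "bnorm B d > 0" using bnorm_nonneg[OF B, of d] bnorm_eq_0_iff[OF B] by force
  define u where "u = (1 / bnorm B d) *\<^sub>R d"
  have "bnorm B u \<le> 1" using bnorm_scaleR[OF B, of "1 / bnorm B d" d] pos by (simp add: u_def)
  then have "\<bar>A (replicate p u)\<bar> \<le> form_norm B p A"
    unfolding form_norm_def by (intro cSup_upper bdd_above_form_norm[OF B A]) blast
  moreover have "d = bnorm B d *\<^sub>R u" using pos by (simp add: u_def)
  then have "A (replicate p d) = bnorm B d ^ p * A (replicate p u)"
    using multilinear_map_scaleR[OF A, of "replicate p u" "bnorm B d"]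
    by (simp add: map_replicate)
  ultimately show ?thesis using pos by (simp add: abs_mult mult.commute mult_left_mono)
qed

section \<open>A sublinear rate from a one-step recurrence\<close>

lemma power_le_pochhammer:
  assumes "(0::real) \<le> a"
  shows "a ^ n \<le> pochhammer a n"
proof -
  have "(\<Prod>i<n. a) \<le> (\<Prod>i<n. a + of_nat i)" by (rule prod_mono) (use assms in auto)
  then show ?thesis by (simp add: pochhammer_prod atLeast0LessThan)
qed

lemma pochhammer_le_power:
  assumes "(0::real) \<le> a"
  shows "pochhammer a n \<le> (a + n) ^ n"
proof -
  have "(\<Prod>i<n. a + of_nat i) \<le> (\<Prod>i<n. a + n)" by (rule prod_mono) (use assms in auto)
  then show ?thesis by (simp add: pochhammer_prod atLeast0LessThan)
qed

lemma recurrence_pochhammer_bound: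
  fixes \<delta> :: "nat \<Rightarrow> real"
  assumes "0 \<le> c"
    and rec: "\<And>k t. 0 \<le> t \<Longrightarrow> t \<le> 1 \<Longrightarrow> \<delta> (Suc k) \<le> (1 - t) * \<delta> k + c * t^(p+1)"
  shows "pochhammer (real k) (p+1) * \<delta> k \<le> real k * (real p + 1)^(p+1) * c"
proof (induction k)
  case 0
  then show ?case by (simp add: pochhammer_rec)
next
  case (Suc k)
  define Q where "Q = pochhammer (real k + 1) p"
  define s where "s = real k + real p + 1"
  define t where "t = (real p + 1) / s"
  have "Q > 0" unfolding Q_def by (rule pochhammer_pos) simp
  have "Q \<le> s ^ p"
    using pochhammer_le_power[of "real k + 1" p] unfolding Q_def s_def by (simp add: add_ac)
  have "s > 0" "0 \<le> t" "t \<le> 1" unfolding t_def s_def by auto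
  have "pochhammer (real (Suc k)) (p+1) = s * Q"
    unfolding Q_def s_def by (simp add: pochhammer_rec' add_ac)
  then have "pochhammer (real (Suc k)) (p+1) * \<delta> (Suc k) = s * Q * \<delta> (Suc k)" by simp
  also have "\<dots> \<le> s * Q * ((1 - t) * \<delta> k + c * t^(p+1))"
    using rec[OF \<open>0 \<le> t\<close> \<open>t \<le> 1\<close>] \<open>s > 0\<close> \<open>Q > 0\<close> by (intro mult_left_mono) auto
  also have "\<dots> = real k * Q * \<delta> k + c * (real p + 1)^(p+1) * (Q / s^p)"
  proof -
    have e1: "s * (1 - t) = real k"
      unfolding t_def using \<open>s > 0\<close> by (simp add: field_simps s_def)
    have e2: "s * t^(p+1) = (real p + 1)^(p+1) / s^p"
      unfolding t_def using \<open>s > 0\<close> by (simp add: power_divide field_simps)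
    have "s * Q * ((1 - t) * \<delta> k + c * t^(p+1)) = Q * (s * (1 - t)) * \<delta> k + c * Q * (s * t^(p+1))"
      by (simp add: algebra_simps)
    then show ?thesis unfolding e1 e2 by simp
  qed
  also have "\<dots> \<le> real k * (real p + 1)^(p+1) * c + c * (real p + 1)^(p+1) * 1"
  proof (rule add_mono)
    show "real k * Q * \<delta> k \<le> real k * (real p + 1)^(p+1) * c"
      using Suc.IH unfolding Q_def by (simp add: pochhammer_rec)
    show "c * (real p + 1)^(p+1) * (Q / s^p) \<le> c * (real p + 1)^(p+1) * 1"
      using \<open>0 \<le> c\<close> \<open>Q \<le> s ^ p\<close> \<open>s > 0\<close> by (intro mult_left_mono) auto
  qed
  also have "\<dots> = real (Suc k) * (real p + 1)^(p+1) * c" by (simp add: algebra_simps)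
  finally show ?case .
qed

lemma recurrence_rate:
  fixes \<delta> :: "nat \<Rightarrow> real"
  assumes "0 \<le> c"
    and rec: "\<And>k t. 0 \<le> t \<Longrightarrow> t \<le> 1 \<Longrightarrow> \<delta> (Suc k) \<le> (1 - t) * \<delta> k + c * t^(p+1)"
    and "N \<ge> 1"
  shows "\<delta> N \<le> (real p + 1)^(p+1) * c / real N ^ p"
proof (cases "\<delta> N \<le> 0")
  case True
  moreover have "0 \<le> (real p + 1)^(p+1) * c / real N ^ p" using \<open>0 \<le> c\<close> by simp
  ultimately show ?thesis by linarith
next
  case False
  have "real N ^ (p+1) * \<delta> N \<le> pochhammer (real N) (p+1) * \<delta> N"
    using power_le_pochhammer[of "real N" "p+1"] False by (intro mult_right_mono) auto
  also have "\<dots> \<le> real N * (real p + 1)^(p+1) * c"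
    by (rule recurrence_pochhammer_bound[of c \<delta> p, OF \<open>0 \<le> c\<close> rec])
  finally have "real N * (real N ^ p * \<delta> N) \<le> real N * ((real p + 1)^(p+1) * c)"
    by (simp add: algebra_simps)
  then have "real N ^ p * \<delta> N \<le> (real p + 1)^(p+1) * c" using \<open>N \<ge> 1\<close> by simp
  then show ?thesis using \<open>N \<ge> 1\<close> by (simp add: field_simps)
qed

section \<open>The regularized tensor step\<close>

lemma p_times_diff_on_segment_derivative:
  assumes fdiff: "p_times_diff_on p U f Df" and "m < p" and "x + t *\<^sub>R d \<in> U"
  shows "((\<lambda>s. Df m (x + s *\<^sub>R d) (replicate m d)) has_real_derivative
           Df (Suc m) (x + t *\<^sub>R d) (replicate (Suc m) d)) (at t)"
proof -
  define z where "z = x + t *\<^sub>R d"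
  have Dz: "((\<lambda>w. Df m w (replicate m d)) has_derivative
              (\<lambda>v. Df (Suc m) z (replicate m d @ [v]))) (at z)"
    using assms unfolding p_times_diff_on_def z_def by simp
  have "((\<lambda>s. x + s *\<^sub>R d) has_derivative (\<lambda>s. s *\<^sub>R d)) (at t)"
    by (auto intro!: derivative_eq_intros)
  from has_derivative_compose[OF this Dz[unfolded z_def]]
  have "((\<lambda>s. Df m (x + s *\<^sub>R d) (replicate m d)) has_derivative
          (\<lambda>s. Df (Suc m) z (replicate m d @ [s *\<^sub>R d]))) (at t)"
    by (simp add: z_def)
  moreover have "(\<lambda>s. Df (Suc m) z (replicate m d @ [s *\<^sub>R d]))
      = (\<lambda>s. Df (Suc m) z (replicate (Suc m) d) * s)"
    using linear_scale[OF has_derivative_linear[OF Dz], of _ d]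
    by (simp add: replicate_append_same mult.commute)
  ultimately show ?thesis unfolding has_field_derivative_def z_def by simp
qed

locale lipschitz_pth_derivative =
  fixes B :: "'a::euclidean_space \<Rightarrow> 'a" and S U :: "'a set" and f :: "'a \<Rightarrow> real"
    and Df :: "nat \<Rightarrow> 'a \<Rightarrow> 'a list \<Rightarrow> real" and p :: nat and L :: real
  assumes B: "self_adj_pos_def B" and p1: "p \<ge> 1"
    and U: "open U" and S: "convex S" "S \<subseteq> U"
    and fdiff: "p_times_diff_on p U f Df"
    and Lip: "\<forall>y\<in>S. \<forall>z\<in>S. form_norm B p (\<lambda>us. Df p y us - Df p z us) \<le> L * bnorm B (y - z)"
begin

lemma top_derivative_lipschitz:
  assumes "x \<in> S" "z \<in> S"
  shows "\<bar>Df p z (replicate p d) - Df p x (replicate p d)\<bar> \<le> L * bnorm B (z - x) * bnorm B d ^ p"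
proof -
  define A where "A = (\<lambda>us. Df p z us - Df p x us)"
  have "multilinear p A" unfolding A_def
    using p_times_diff_on_multilinear[OF fdiff U] assms S(2) by (intro multilinear_diff) auto
  then have "\<bar>A (replicate p d)\<bar> \<le> form_norm B p A * bnorm B d ^ p"
    using abs_le_form_norm[OF B _ p1] by blast
  also have "\<dots> \<le> L * bnorm B (z - x) * bnorm B d ^ p"
    using Lip assms unfolding A_def by (intro mult_right_mono zero_le_power bnorm_nonneg[OF B]) auto
  finally show ?thesis unfolding A_def .
qed

lemma taylor_error:
  assumes x: "x \<in> S" and y: "y \<in> S"
  shows "\<bar>f y - taylor f Df p x y\<bar> \<le> L / fact (p+1) * bnorm B (y - x) ^ (p+1)"
proof -
  define d where "d = y - x"
  define g where "g m t = Df m (x + t *\<^sub>R d) (replicate m d)" for m t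
  have seg: "x + t *\<^sub>R d \<in> S" if "0 \<le> t" "t \<le> 1" for t
    using convexD_alt[OF S(1) x y that] by (simp add: d_def algebra_simps)
  have "\<bar>g p t - g p 0\<bar> \<le> L * bnorm B d ^ (p+1) * t" if t: "0 \<le> t" "t \<le> 1" for t
  proof -
    have "bnorm B (x + t *\<^sub>R d - x) = t * bnorm B d"
      using bnorm_scaleR[OF B, of t d] t by simp
    then show ?thesis
      using top_derivative_lipschitz[OF x seg[OF t], of d] unfolding g_def
      by (simp add: algebra_simps)
  qed
  moreover have "(g m has_real_derivative g (Suc m) t) (at t)" if "m < p" "0 \<le> t" "t \<le> 1" for m t
    unfolding g_def using p_times_diff_on_segment_derivative[OF fdiff] seg S(2) that by blast
  ultimately have "\<bar>g 0 1 - (\<Sum>m\<le>p. g m 0 / fact m)\<bar> \<le> L * bnorm B d ^ (p+1) / fact (p+1)"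
    by (intro Taylor_remainder_bound[OF p1]) auto
  moreover have "g 0 1 = f y" "g 0 0 = f x"
    using fdiff x y S(2) unfolding g_def d_def p_times_diff_on_def by auto
  moreover have "(\<Sum>m\<le>p. g m 0 / fact m) = g 0 0 + (\<Sum>m=1..p. g m 0 / fact m)"
    unfolding atMost_atLeast0 by (subst sum.atLeast_Suc_atMost) simp_all
  ultimately show ?thesis by (simp add: taylor_def g_def d_def)
qed

lemma tensor_step_le:
  assumes "L \<le> H" and step: "tensor_step S B f Df h p H x y" and "x \<in> S" "z \<in> S"
  shows "f y + h y \<le> f z + h z + (L + H) / fact (p+1) * bnorm B (z - x) ^ (p+1)"
proof -
  have "y \<in> S" using step unfolding tensor_step_def by blast
  have "f y \<le> taylor f Df p x y + L / fact (p+1) * bnorm B (y - x) ^ (p+1)"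
    using taylor_error[OF \<open>x \<in> S\<close> \<open>y \<in> S\<close>] by (simp add: abs_le_iff)
  also have "\<dots> \<le> taylor f Df p x y + H / fact (p+1) * bnorm B (y - x) ^ (p+1)"
    using \<open>L \<le> H\<close> bnorm_nonneg[OF B]
    by (intro add_left_mono mult_right_mono divide_right_mono) auto
  finally have "f y + h y \<le> taylor f Df p x z + H / fact (p+1) * bnorm B (z - x) ^ (p+1) + h z"
    using step \<open>z \<in> S\<close> unfolding tensor_step_def by fastforce
  moreover have "taylor f Df p x z \<le> f z + L / fact (p+1) * bnorm B (z - x) ^ (p+1)"
    using taylor_error[OF \<open>x \<in> S\<close> \<open>z \<in> S\<close>] by (simp add: abs_le_iff)
  ultimately show ?thesis by (simp add: add_divide_distrib distrib_right)
qed

lemma tensor_step_recurrence: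
  fixes h :: "'a \<Rightarrow> real"
  assumes "0 \<le> L" "L \<le> H" and conv: "convex_on S (\<lambda>z. f z + h z)"
    and step: "tensor_step S B f Df h p H x y" and "x \<in> S" "xs \<in> S"
    and "bnorm B (x - xs) \<le> D" and t: "0 \<le> t" "t \<le> 1"
  shows "f y + h y - (f xs + h xs)
           \<le> (1 - t) * (f x + h x - (f xs + h xs)) + (L + H) * D^(p+1) / fact (p+1) * t^(p+1)"
proof -
  define F where "F z = f z + h z" for z
  define z where "z = (1 - t) *\<^sub>R x + t *\<^sub>R xs"
  have "z \<in> S" unfolding z_def using convexD_alt[OF S(1) \<open>x \<in> S\<close> \<open>xs \<in> S\<close> t] .
  have Fz: "F z \<le> (1 - t) * F x + t * F xs"
    using convex_onD[OF conv t \<open>x \<in> S\<close> \<open>xs \<in> S\<close>] unfolding F_def z_def .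
  have "bnorm B (z - x) = t * bnorm B (x - xs)"
    using bnorm_scaleR[OF B, of t "xs - x"] bnorm_minus_commute[OF B, of xs x] t
    by (simp add: z_def algebra_simps)
  then have "bnorm B (z - x) ^ (p+1) \<le> (t * D) ^ (p+1)"
    using \<open>bnorm B (x - xs) \<le> D\<close> t bnorm_nonneg[OF B]
    by (intro power_mono) (auto simp: mult_left_mono)
  then have "(L + H) / fact (p+1) * bnorm B (z - x) ^ (p+1) \<le> (L + H) / fact (p+1) * (t * D) ^ (p+1)"
    using assms(1,2) by (intro mult_left_mono) auto
  also have "\<dots> = (L + H) * D^(p+1) / fact (p+1) * t^(p+1)" by (simp add: power_mult_distrib)
  finally have "F y \<le> F z + (L + H) * D^(p+1) / fact (p+1) * t^(p+1)"
    using tensor_step_le[OF \<open>L \<le> H\<close> step \<open>x \<in> S\<close> \<open>z \<in> S\<close>] unfolding F_def by linarith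
  moreover have "(1 - t) * (F x - F xs) = (1 - t) * F x + t * F xs - F xs"
    by (simp add: algebra_simps)
  ultimately show ?thesis using Fz unfolding F_def by linarith
qed

lemma tensor_method_rate:
  fixes h :: "'a \<Rightarrow> real" and x :: "nat \<Rightarrow> 'a"
  assumes "0 \<le> L" "L \<le> H" and conv: "convex_on S (\<lambda>z. f z + h z)"
    and xs: "xs \<in> S" "\<And>y. y \<in> S \<Longrightarrow> f xs + h xs \<le> f y + h y"
    and x0: "x 0 \<in> S" and steps: "\<And>k. tensor_step S B f Df h p H (x k) (x (Suc k))"
    and D: "\<And>y. y \<in> S \<Longrightarrow> f y + h y \<le> f (x 0) + h (x 0) \<Longrightarrow> bnorm B (y - xs) \<le> D"
    and "N \<ge> 1"
  shows "f (x N) + h (x N) - (f xs + h xs)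
           \<le> (real p + 1)^(p+1) * ((L + H) * D^(p+1) / fact (p+1)) / real N ^ p"
proof -
  define F where "F z = f z + h z" for z
  have xS: "x k \<in> S" for k
    using x0 steps unfolding tensor_step_def by (cases k) auto
  have "bnorm B 0 = 0" using bnorm_eq_0_iff[OF B] by blast
  then have "F (x (Suc k)) \<le> F (x k)" for k
    using tensor_step_le[OF \<open>L \<le> H\<close> steps[of k] xS[of k] xS[of k]] by (simp add: F_def)
  then have "F (x k) \<le> F (x 0)" for k
    by (induction k) (auto intro: order_trans)
  then have dist: "bnorm B (x k - xs) \<le> D" for k
    using D xS unfolding F_def by blast
  have "0 \<le> D" using dist[of 0] bnorm_nonneg[OF B, of "x 0 - xs"] by linarith
  then have "0 \<le> (L + H) * D^(p+1) / fact (p+1)" using assms(1,2) by simp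
  from recurrence_rate[of _ "\<lambda>k. F (x k) - F xs", OF this _ \<open>N \<ge> 1\<close>]
  show ?thesis
    using tensor_step_recurrence[OF assms(1,2) conv steps xS xs(1) dist] unfolding F_def by blast
qed

end

section \<open>The number of iterations\<close>

definition omega_pq :: "nat \<Rightarrow> real \<Rightarrow> real \<Rightarrow> real \<Rightarrow> real \<Rightarrow> real" where
  "omega_pq p q \<sigma> L D =
     (real p + 1) / fact p * ((q - 1) / q) powr (q - 1) * L * D powr (real p - q + 1) / \<sigma>"

definition superlinear_level :: "nat \<Rightarrow> real \<Rightarrow> real \<Rightarrow> real \<Rightarrow> real" where
  "superlinear_level p q \<sigma> L = (1 / q) * ((\<sigma> powr (real p + 1) / (q - 1) powr (q - 1))
     * (fact p / ((real p + 1) * L)) powr q) powr (1 / (real p - q + 1))"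

definition threshold_scale :: "nat \<Rightarrow> real \<Rightarrow> real \<Rightarrow> real \<Rightarrow> real \<Rightarrow> real" where
  "threshold_scale p q \<sigma> L D = (q powr q / (q - 1) powr (q - 1)
     * omega_pq p q \<sigma> L D powr ((real p + 1) / real p)) powr (1 / (real p - q + 1))"

lemma ln_omega_pq:
  assumes "q > 1" "\<sigma> > 0" "L > 0" "D > 0"
  shows "ln (omega_pq p q \<sigma> L D) = ln (real p + 1) - ln (fact p) + (q - 1) * (ln (q - 1) - ln q)
           + ln L + (real p - q + 1) * ln D - ln \<sigma>"
  unfolding omega_pq_def using assms by (simp add: ln_mult ln_div)

lemma ln_superlinear_level:
  assumes "q > 1" "\<sigma> > 0" "L > 0"
  shows "ln (superlinear_level p q \<sigma> L) = ((real p + 1) * ln \<sigma> - (q - 1) * ln (q - 1)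
           + q * (ln (fact p) - ln (real p + 1) - ln L)) / (real p - q + 1) - ln q"
proof -
  define Y where "Y = (\<sigma> powr (real p + 1) / (q - 1) powr (q - 1)) * (fact p / ((real p + 1) * L)) powr q"
  have "Y > 0" unfolding Y_def using assms by simp
  moreover have "ln Y = (real p + 1) * ln \<sigma> - (q - 1) * ln (q - 1)
                        + q * (ln (fact p) - ln (real p + 1) - ln L)"
    unfolding Y_def using assms by (simp add: ln_mult ln_div)
  ultimately show ?thesis
    unfolding superlinear_level_def Y_def[symmetric] using assms by (simp add: ln_mult ln_div)
qed

lemma ln_threshold_scale:
  assumes "q > 1" "\<sigma> > 0" "L > 0" "D > 0"
  shows "ln (threshold_scale p q \<sigma> L D) = (q * ln q - (q - 1) * ln (q - 1)
           + (real p + 1) / real p * ln (omega_pq p q \<sigma> L D)) / (real p - q + 1)"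
proof -
  have "omega_pq p q \<sigma> L D > 0" unfolding omega_pq_def using assms by simp
  then show ?thesis unfolding threshold_scale_def using assms by (simp add: ln_mult ln_div)
qed

lemma superlinear_level_times_threshold_scale:
  assumes "p \<ge> 1" "q > 1" "\<sigma> > 0" "L > 0" "D > 0" "real p > q - 1"
  shows "(real p + 1) * (L * D^(p+1) / fact p)
           = superlinear_level p q \<sigma> L * threshold_scale p q \<sigma> L D ^ p"
proof -
  define r where "r = real p - q + 1"
  define T where "T = superlinear_level p q \<sigma> L"
  define W where "W = threshold_scale p q \<sigma> L D"
  have "r > 0" using assms unfolding r_def by simp
  have "T > 0" "W > 0"
    unfolding T_def W_def superlinear_level_def threshold_scale_def omega_pq_def using assms by simp_all
  \<comment> \<open>In logarithms the identity is linear in ln q, ln (q - 1), ln \<sigma>, ln L, ln D and ln p!.\<close>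
  have "r * ln T = (real p + 1) * ln \<sigma> - (q - 1) * ln (q - 1)
                    + q * (ln (fact p) - ln (real p + 1) - ln L) - r * ln q"
    unfolding T_def ln_superlinear_level[OF assms(2-4)] r_def using \<open>r > 0\<close> r_def
    by (simp add: field_simps)
  moreover have "r * (real p * ln W) = real p * (q * ln q - (q - 1) * ln (q - 1))
                    + (real p + 1) * ln (omega_pq p q \<sigma> L D)"
  proof -
    have "r * ln W = q * ln q - (q - 1) * ln (q - 1) + (real p + 1) / real p * ln (omega_pq p q \<sigma> L D)"
      unfolding W_def ln_threshold_scale[OF assms(2-5)] r_def using \<open>r > 0\<close> r_def by simp
    moreover have "real p > 0" using assms(1) by simp
    ultimately show ?thesis by (simp add: field_simps)
  qed
  ultimately have "r * (ln T + real p * ln W) = r * (ln (real p + 1) + ln L + (real p + 1) * ln D - ln (fact p))"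
    unfolding ln_omega_pq[OF assms(2-5)] r_def by (simp add: algebra_simps)
  then have "ln (T * W ^ p) = ln (real p + 1) + ln L + (real p + 1) * ln D - ln (fact p)"
    using \<open>r > 0\<close> \<open>T > 0\<close> \<open>W > 0\<close> by (simp add: ln_mult ln_realpow)
  also have "\<dots> = ln ((real p + 1) * (L * D^(p+1) / fact p))"
  proof -
    have "ln (L * D^(p+1)) = ln L + (real p + 1) * ln D"
      using assms by (simp add: ln_mult ln_realpow algebra_simps)
    then show ?thesis using assms by (simp add: ln_mult ln_div)
  qed
  finally have "ln (T * W ^ p) = ln ((real p + 1) * (L * D^(p+1) / fact p))" .
  then show ?thesis
    using \<open>T > 0\<close> \<open>W > 0\<close> assms unfolding T_def W_def by (subst ln_inj_iff[symmetric]) auto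
qed

lemma sublinear_rate_le_superlinear_level:
  assumes "p \<ge> 1" "q > 1" "\<sigma> > 0" "L > 0" "D \<ge> 0" "real p > q - 1"
    and N: "real N \<ge> 2 * real p * threshold_scale p q \<sigma> L D"
  shows "(real p + 1)^(p+1) * (L * D^(p+1) / fact p) / real N ^ p \<le> superlinear_level p q \<sigma> L"
proof (cases "D = 0")
  case True
  then show ?thesis using \<open>q > 1\<close> by (simp add: superlinear_level_def)
next
  case False
  define P where "P = real p"
  define W where "W = threshold_scale p q \<sigma> L D"
  define c where "c = L * D^(p+1) / fact p"
  have "W > 0" "c > 0" "P \<ge> 1"
    using assms False unfolding W_def threshold_scale_def omega_pq_def c_def P_def by auto
  have "2 * P * W > 0" using \<open>W > 0\<close> \<open>P \<ge> 1\<close> by simp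
  then have "real N > 0" using N unfolding W_def P_def by linarith
  have "(P + 1)^(p+1) * c / real N ^ p \<le> (P + 1)^(p+1) * c / (2 * P * W) ^ p"
    using N \<open>real N > 0\<close> \<open>P \<ge> 1\<close> \<open>W > 0\<close> \<open>c > 0\<close> unfolding W_def P_def
    by (intro divide_left_mono power_mono mult_pos_pos zero_less_power) auto
  also have "\<dots> = (P + 1) * c * ((P + 1) / (2 * P)) ^ p / W ^ p"
    using \<open>P \<ge> 1\<close> \<open>W > 0\<close> by (simp add: power_divide power_mult_distrib field_simps)
  also have "\<dots> \<le> (P + 1) * c / W ^ p"
  proof -
    have "((P + 1) / (2 * P)) ^ p \<le> 1" using \<open>P \<ge> 1\<close> by (intro power_le_one) auto
    then show ?thesis using \<open>c > 0\<close> \<open>P \<ge> 1\<close> \<open>W > 0\<close>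
      by (simp add: divide_right_mono mult_left_le)
  qed
  also have "\<dots> = superlinear_level p q \<sigma> L"
    using superlinear_level_times_threshold_scale[OF assms(1-4) _ assms(6)] False assms(5) \<open>W > 0\<close>
    unfolding W_def c_def P_def by simp
  finally show ?thesis unfolding c_def P_def .
qed

lemma divide_fact_Suc_cancel: "(a + real n * a) * b / fact (n + 1) = a * b / (fact n :: real)"
proof -
  have "(a + real n * a) * b / fact (n + 1) = ((real n + 1) * (a * b)) / ((real n + 1) * fact n)"
    by (simp add: algebra_simps)
  also have "\<dots> = a * b / fact n"
    by (rule mult_divide_mult_cancel_left) simp
  finally show ?thesis .
qed

theorem corollary2:
  fixes B :: "'a::euclidean_space \<Rightarrow> 'a"
    and S U :: "'a set"
    and f h :: "'a \<Rightarrow> real"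
    and Df :: "nat \<Rightarrow> 'a \<Rightarrow> 'a list \<Rightarrow> real"
    and p :: nat and q \<sigma> L :: real
    and xs :: 'a and x :: "nat \<Rightarrow> 'a"
  assumes B: "self_adj_pos_def B"
    and p2: "p \<ge> 2"
    and h: "proper_closed_convex S h"
    and U: "open U" "convex U" "S \<subseteq> U"
    and fconv: "convex_on U f"
    and fdiff: "p_times_diff_on p U f Df"
    and Lpos: "0 < L"
    and Lip: "\<forall>y\<in>S. \<forall>z\<in>S. form_norm B p (\<lambda>us. Df p y us - Df p z us) \<le> L * bnorm B (y - z)"
    and q2: "q \<ge> 2" and \<sigma>pos: "\<sigma> > 0"
    and uc: "uniformly_convex S B (\<lambda>z. f z + h z) q \<sigma>"
    and pq: "real p > q - 1"
    and xs: "xs \<in> S" "\<forall>y\<in>S. f xs + h xs \<le> f y + h y"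
    and x0: "x 0 \<in> S"
    and steps: "\<forall>k. tensor_step S B f Df h p (real p * L) (x k) (x (Suc k))"
    and Dfin: "bdd_above {bnorm B (y - xs) | y. y \<in> S \<and> f y + h y \<le> f (x 0) + h (x 0)}"
  shows "let F = (\<lambda>z. f z + h z);
             D = Sup {bnorm B (y - xs) | y. y \<in> S \<and> F y \<le> F (x 0)};
             \<omega> = (real p + 1) / fact p * ((q - 1) / q) powr (q - 1) * L * D powr (real p - q + 1) / \<sigma>;
             N = nat \<lceil>2 * real p * (q powr q / (q - 1) powr (q - 1) * \<omega> powr ((real p + 1) / real p))
                        powr (1 / (real p - q + 1))\<rceil> + 2
         in x N \<in> S \<and>
            F (x N) - F xs \<le> (1 / q) * ((\<sigma> powr (real p + 1) / (q - 1) powr (q - 1))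
                 * (fact p / ((real p + 1) * L)) powr q) powr (1 / (real p - q + 1))"
proof -
  define D where "D = Sup {bnorm B (y - xs) | y. y \<in> S \<and> f y + h y \<le> f (x 0) + h (x 0)}"
  define N where "N = nat \<lceil>2 * real p * threshold_scale p q \<sigma> L D\<rceil> + 2"
  interpret smooth: lipschitz_pth_derivative B S U f Df p L
    using B p2 h U fdiff Lip by unfold_locales (auto simp: proper_closed_convex_def)
  have conv: "convex_on S (\<lambda>z. f z + h z)"
    using h convex_on_subset[OF fconv U(3)] unfolding proper_closed_convex_def
    by (auto intro: convex_on_add)
  have D: "bnorm B (y - xs) \<le> D" if "y \<in> S" "f y + h y \<le> f (x 0) + h (x 0)" for y
    unfolding D_def using that Dfin by (intro cSup_upper) auto
  have "0 \<le> D" using D[OF x0 order_refl] bnorm_nonneg[OF B] by (metis order_trans)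
  have N: "real N \<ge> 2 * real p * threshold_scale p q \<sigma> L D"
    unfolding N_def using real_nat_ceiling_ge[of "2 * real p * threshold_scale p q \<sigma> L D"] by simp
  have "f (x N) + h (x N) - (f xs + h xs)
          \<le> (real p + 1)^(p+1) * ((L + real p * L) * D^(p+1) / fact (p+1)) / real N ^ p"
    by (rule smooth.tensor_method_rate) (use Lpos p2 conv xs x0 steps D in \<open>auto simp: N_def\<close>)
  also have "\<dots> = (real p + 1)^(p+1) * (L * D^(p+1) / fact p) / real N ^ p"
    by (simp only: divide_fact_Suc_cancel)
  also have "\<dots> \<le> superlinear_level p q \<sigma> L"
    using p2 q2 \<sigma>pos Lpos \<open>0 \<le> D\<close> pq N by (intro sublinear_rate_le_superlinear_level) auto
  finally have "f (x N) + h (x N) - (f xs + h xs) \<le> superlinear_level p q \<sigma> L" .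
  moreover have "x N \<in> S" using x0 steps unfolding tensor_step_def by (cases N) auto
  ultimately show ?thesis
    unfolding Let_def D_def N_def threshold_scale_def omega_pq_def superlinear_level_def by simp
qed

end
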